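(* For any group $G$ the following conditions are equivalent: (i) $G$ is amenable; (ii) the comparison map $\iota^1: H^1(G;V)\to H^1_{(\infty)}(G;V)$ is injective for every dual normed $\mathbb{R}[G]$-module $V$; (iii) the comparison map $\iota^k: H^k(G;V)\to H^k_{(\infty)}(G;V)$ is injective for every dual normed $\mathbb{R}[G]$-module $V$ and every $k\in\mathbb{N}$.
   Context: A normed $\mathbb{R}[G]$-module is a normed real vector space $V$ on which $G$ acts on the left by linear isometries. For such $V$, $\ell^\infty(G,V)$ denotes the $\mathbb{R}[G]$-module of functions $f:G\to V$ with bounded image, with action $(g\cdot f)(h)=g\cdot (f(g^{-1}h))$. The $\ell^\infty$-cohomology of $G$ is $H^\bullet_{(\infty)}(G;V):=H^\bullet(G;\ell^\infty(G,V))$ (ordinary group cohomology with coefficients in the $\mathbb{R}[G]$-module $\ell^\infty(G,V)$). The comparison map $\iota^\bullet: H^\bullet(G;V)\to H^\bullet_{(\infty)}(G;V)$ is induced by the $G$-equivariant inclusion $\iota:V\to\ell^\infty(G,V)$ sending $v$ to the constant function with value $v$. A dual normed $\mathbb{R}[G]$-module is the topological dual $V=W'$ of a normed $\mathbb{R}[G]$-module $W$, with the operator norm and action $(g\cdot v)(w)=v(g^{-1}\cdot w)$. $G$ is amenable if there is a linear map $m:\ell^\infty(G,\mathbb{R})\to\mathbb{R}$ with $m(\text{constant } c)=c$, $m(f)\ge 0$ for $f\ge0$, and $m(g\cdot f)=m(f)$ for all $g,f$. *)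

theory Defs
  imports Complex_Main
begin

text \<open>The group G is the ambient type 'g of class group_add (group operation written +,
  identity 0, inverse uminus; commutativity is NOT assumed).\<close>

definition bdd_real_fun :: "('a \<Rightarrow> real) \<Rightarrow> bool" where
  "bdd_real_fun f \<longleftrightarrow> (\<exists>C. \<forall>h. \<bar>f h\<bar> \<le> C)"

definition amenable :: "'g::group_add itself \<Rightarrow> bool" where
  "amenable (_ :: 'g itself) \<longleftrightarrow>
     (\<exists>m :: ('g \<Rightarrow> real) \<Rightarrow> real.
        (\<forall>f f'. bdd_real_fun f \<and> bdd_real_fun f' \<longrightarrow> m (\<lambda>h. f h + f' h) = m f + m f') \<and>
        (\<forall>a f. bdd_real_fun f \<longrightarrow> m (\<lambda>h. a * f h) = a * m f) \<and>
        (\<forall>c. m (\<lambda>h. c) = c) \<and>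
        (\<forall>f. bdd_real_fun f \<and> (\<forall>h. 0 \<le> f h) \<longrightarrow> 0 \<le> m f) \<and>
        (\<forall>g f. bdd_real_fun f \<longrightarrow> m (\<lambda>h. f ((- g) + h)) = m f))"

record ('g, 'm) gmod =
  mcarr :: "'m set"
  madd :: "'m \<Rightarrow> 'm \<Rightarrow> 'm"
  mscale :: "real \<Rightarrow> 'm \<Rightarrow> 'm"
  mzero :: "'m"
  mact :: "'g \<Rightarrow> 'm \<Rightarrow> 'm"

record ('g, 'm) nmod = "('g, 'm) gmod" +
  mnorm :: "'m \<Rightarrow> real"

definition normed_module :: "('g::group_add, 'w) nmod \<Rightarrow> bool" where
  "normed_module W \<longleftrightarrow>
     mzero W \<in> mcarr W \<and>
     (\<forall>x\<in>mcarr W. \<forall>y\<in>mcarr W. madd W x y \<in> mcarr W) \<and>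
     (\<forall>a. \<forall>x\<in>mcarr W. mscale W a x \<in> mcarr W) \<and>
     (\<forall>x\<in>mcarr W. \<forall>y\<in>mcarr W. \<forall>z\<in>mcarr W. madd W (madd W x y) z = madd W x (madd W y z)) \<and>
     (\<forall>x\<in>mcarr W. \<forall>y\<in>mcarr W. madd W x y = madd W y x) \<and>
     (\<forall>x\<in>mcarr W. madd W x (mzero W) = x) \<and>
     (\<forall>x\<in>mcarr W. madd W x (mscale W (-1) x) = mzero W) \<and>
     (\<forall>a b. \<forall>x\<in>mcarr W. mscale W (a + b) x = madd W (mscale W a x) (mscale W b x)) \<and>
     (\<forall>a. \<forall>x\<in>mcarr W. \<forall>y\<in>mcarr W. mscale W a (madd W x y) = madd W (mscale W a x) (mscale W a y)) \<and>
     (\<forall>a b. \<forall>x\<in>mcarr W. mscale W a (mscale W b x) = mscale W (a * b) x) \<and>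
     (\<forall>x\<in>mcarr W. mscale W 1 x = x) \<and>
     (\<forall>x\<in>mcarr W. 0 \<le> mnorm W x) \<and>
     (\<forall>x\<in>mcarr W. mnorm W x = 0 \<longleftrightarrow> x = mzero W) \<and>
     (\<forall>a. \<forall>x\<in>mcarr W. mnorm W (mscale W a x) = \<bar>a\<bar> * mnorm W x) \<and>
     (\<forall>x\<in>mcarr W. \<forall>y\<in>mcarr W. mnorm W (madd W x y) \<le> mnorm W x + mnorm W y) \<and>
     (\<forall>g. \<forall>x\<in>mcarr W. mact W g x \<in> mcarr W) \<and>
     (\<forall>g. \<forall>x\<in>mcarr W. \<forall>y\<in>mcarr W. mact W g (madd W x y) = madd W (mact W g x) (mact W g y)) \<and>
     (\<forall>g a. \<forall>x\<in>mcarr W. mact W g (mscale W a x) = mscale W a (mact W g x)) \<and>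
     (\<forall>g. \<forall>x\<in>mcarr W. mnorm W (mact W g x) = mnorm W x) \<and>
     (\<forall>x\<in>mcarr W. mact W 0 x = x) \<and>
     (\<forall>g h. \<forall>x\<in>mcarr W. mact W (g + h) x = mact W g (mact W h x))"

definition dual_module :: "('g::group_add, 'w) nmod \<Rightarrow> ('g, 'w \<Rightarrow> real) gmod" where
  "dual_module W = \<lparr>
     mcarr = {\<phi>. (\<forall>x\<in>mcarr W. \<forall>y\<in>mcarr W. \<phi> (madd W x y) = \<phi> x + \<phi> y) \<and>
                 (\<forall>a. \<forall>x\<in>mcarr W. \<phi> (mscale W a x) = a * \<phi> x) \<and>
                 (\<exists>C. \<forall>x\<in>mcarr W. \<bar>\<phi> x\<bar> \<le> C * mnorm W x) \<and>
                 (\<forall>x. x \<notin> mcarr W \<longrightarrow> \<phi> x = 0)},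
     madd = (\<lambda>\<phi> \<psi> x. \<phi> x + \<psi> x),
     mscale = (\<lambda>a \<phi> x. a * \<phi> x),
     mzero = (\<lambda>x. 0),
     mact = (\<lambda>g \<phi> x. if x \<in> mcarr W then \<phi> (mact W (- g) x) else 0) \<rparr>"

definition dual_norm :: "('g, 'w) nmod \<Rightarrow> ('w \<Rightarrow> real) \<Rightarrow> real" where
  "dual_norm W \<phi> = Sup {\<bar>\<phi> x\<bar> | x. x \<in> mcarr W \<and> mnorm W x \<le> 1}"

definition linf_module ::
  "('g::group_add, 'm, 'z) gmod_scheme \<Rightarrow> ('m \<Rightarrow> real) \<Rightarrow> ('g, 'g \<Rightarrow> 'm) gmod" where
  "linf_module V nv = \<lparr>
     mcarr = {f. (\<forall>h. f h \<in> mcarr V) \<and> (\<exists>C. \<forall>h. nv (f h) \<le> C)},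
     madd = (\<lambda>f f' h. madd V (f h) (f' h)),
     mscale = (\<lambda>a f h. mscale V a (f h)),
     mzero = (\<lambda>h. mzero V),
     mact = (\<lambda>g f h. mact V g (f ((- g) + h))) \<rparr>"

section \<open>Group cohomology via inhomogeneous cochains G^k \<rightarrow> M (lists of length k)\<close>

definition cochain :: "('g, 'm, 'z) gmod_scheme \<Rightarrow> nat \<Rightarrow> ('g list \<Rightarrow> 'm) \<Rightarrow> bool" where
  "cochain M k c \<longleftrightarrow> (\<forall>xs. length xs = k \<longrightarrow> c xs \<in> mcarr M)"

text \<open>(d c)(g_1,...,g_{k+1}) = g_1 c(g_2,...,g_{k+1})
   + sum_{i=1}^k (-1)^i c(g_1,...,g_i g_{i+1},...,g_{k+1}) + (-1)^{k+1} c(g_1,...,g_k).\<close>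
definition cobound ::
  "('g::group_add, 'm, 'z) gmod_scheme \<Rightarrow> nat \<Rightarrow> ('g list \<Rightarrow> 'm) \<Rightarrow> 'g list \<Rightarrow> 'm" where
  "cobound M k c xs =
     madd M (mact M (hd xs) (c (tl xs)))
       (madd M
          (foldr (madd M)
             (map (\<lambda>i. mscale M ((-1) ^ i)
                     (c (take (i - 1) xs @ [xs ! (i - 1) + xs ! i] @ drop (i + 1) xs)))
                  [1..<k + 1])
             (mzero M))
          (mscale M ((-1) ^ (k + 1)) (c (take k xs))))"

definition cocycle :: "('g::group_add, 'm, 'z) gmod_scheme \<Rightarrow> nat \<Rightarrow> ('g list \<Rightarrow> 'm) \<Rightarrow> bool" where
  "cocycle M k c \<longleftrightarrow> cochain M k c \<and> (\<forall>xs. length xs = Suc k \<longrightarrow> cobound M k c xs = mzero M)"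

definition coboundary :: "('g::group_add, 'm, 'z) gmod_scheme \<Rightarrow> nat \<Rightarrow> ('g list \<Rightarrow> 'm) \<Rightarrow> bool" where
  "coboundary M k c \<longleftrightarrow>
     (case k of 0 \<Rightarrow> c [] = mzero M
      | Suc j \<Rightarrow> (\<exists>b. cochain M j b \<and> (\<forall>xs. length xs = Suc j \<longrightarrow> c xs = cobound M j b xs)))"

text \<open>Injectivity of iota^k : H^k(G;V) \<rightarrow> H^k(G; l^\<infinity>(G,V)), induced by v \<mapsto> constant function:
  a k-cocycle whose image is a coboundary is itself a coboundary.\<close>
definition comparison_injective ::
  "('g::group_add, 'm, 'z) gmod_scheme \<Rightarrow> ('m \<Rightarrow> real) \<Rightarrow> nat \<Rightarrow> bool" where
  "comparison_injective V nv k \<longleftrightarrow>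
     (\<forall>c. cocycle V k c \<and> coboundary (linf_module V nv) k (\<lambda>xs h. c xs) \<longrightarrow> coboundary V k c)"

end

theory Submission
  imports Defs
begin

text \<open>If \<open>m\<close> is an invariant mean, averaging with \<open>m\<close> pointwise on \<open>W\<close> is a \<open>G\<close>-equivariant
  linear retraction \<open>\<ell>\<^sup>\<infinity>(G, W') \<rightarrow> W'\<close> of the inclusion of constants, so it maps
  \<open>\<ell>\<^sup>\<infinity>\<close>-primitives of a cocycle with values in \<open>W'\<close> to primitives in \<open>W'\<close>.

  Conversely take \<open>W = \<ell>\<^sup>\<infinity>(G)/\<real>\<close>. Evaluation \<open>g \<mapsto> ev\<^sub>g\<close> is a \<open>1\<close>-cocycle with values in \<open>W'\<close>
  which becomes a coboundary in \<open>\<ell>\<^sup>\<infinity>(G, W')\<close>, since \<open>h \<mapsto> ev\<^sub>h\<close> is bounded. A primitive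
  \<open>\<phi> \<in> W'\<close> yields a bounded invariant functional \<open>\<mu>\<close> on \<open>\<ell>\<^sup>\<infinity>(G)\<close> with \<open>\<mu>(1) = 1\<close>, and the
  positive part of \<open>\<mu>\<close>, normalised, is an invariant mean.\<close>

lemma bdd_real_fun_add: "bdd_real_fun f \<Longrightarrow> bdd_real_fun g \<Longrightarrow> bdd_real_fun (\<lambda>x. f x + g x)"
  unfolding bdd_real_fun_def by (meson abs_triangle_ineq add_mono order_trans)

lemma bdd_real_fun_scale: "bdd_real_fun f \<Longrightarrow> bdd_real_fun (\<lambda>x. a * f x)"
  unfolding bdd_real_fun_def by (metis abs_ge_zero abs_mult mult_left_mono)

lemma bdd_real_fun_const: "bdd_real_fun (\<lambda>x. c)"
  unfolding bdd_real_fun_def by blast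

lemma bdd_real_fun_comp: "bdd_real_fun f \<Longrightarrow> bdd_real_fun (\<lambda>x. f (t x))"
  unfolding bdd_real_fun_def by blast

lemma bdd_real_fun_diff: "bdd_real_fun f \<Longrightarrow> bdd_real_fun g \<Longrightarrow> bdd_real_fun (\<lambda>x. f x - g x)"
  using bdd_real_fun_add[of f "\<lambda>x. (-1) * g x"] bdd_real_fun_scale[of g "-1"] by simp

lemma bdd_real_fun_min: "bdd_real_fun f \<Longrightarrow> bdd_real_fun g \<Longrightarrow> bdd_real_fun (\<lambda>x. min (f x) (g x))"
proof -
  assume "bdd_real_fun f" "bdd_real_fun g"
  then obtain C D where "\<forall>x. \<bar>f x\<bar> \<le> C" "\<forall>x. \<bar>g x\<bar> \<le> D"
    unfolding bdd_real_fun_def by blast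
  then have "\<bar>min (f x) (g x)\<bar> \<le> max C D" for x
    by (smt (verit) max.cobounded1 max.cobounded2)
  then show ?thesis unfolding bdd_real_fun_def by blast
qed

lemma foldr_madd_hom:
  assumes closed: "\<And>x y. x \<in> A \<Longrightarrow> y \<in> A \<Longrightarrow> madd M x y \<in> A"
    and hom: "\<And>x y. x \<in> A \<Longrightarrow> y \<in> A \<Longrightarrow> T (madd M x y) = madd N (T x) (T y)"
    and "set xs \<subseteq> A" and "z \<in> A"
  shows "foldr (madd M) xs z \<in> A \<and> T (foldr (madd M) xs z) = foldr (madd N) (map T xs) (T z)"
  using assms(3) by (induction xs) (use assms in auto)

lemma cobound_hom:
  fixes M :: "('g::group_add, 'm, 'z) gmod_scheme" and N :: "('g, 'n, 'y) gmod_scheme"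
  assumes add_closed: "\<And>x y. x \<in> A \<Longrightarrow> y \<in> A \<Longrightarrow> madd M x y \<in> A"
    and scale_closed: "\<And>a x. x \<in> A \<Longrightarrow> mscale M a x \<in> A"
    and zero_closed: "mzero M \<in> A"
    and act_closed: "\<And>g x. x \<in> A \<Longrightarrow> mact M g x \<in> A"
    and hom_add: "\<And>x y. x \<in> A \<Longrightarrow> y \<in> A \<Longrightarrow> T (madd M x y) = madd N (T x) (T y)"
    and hom_scale: "\<And>a x. x \<in> A \<Longrightarrow> T (mscale M a x) = mscale N a (T x)"
    and hom_zero: "T (mzero M) = mzero N"
    and hom_act: "\<And>g x. x \<in> A \<Longrightarrow> T (mact M g x) = mact N g (T x)"
    and b: "\<And>ys. length ys = k \<Longrightarrow> b ys \<in> A"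
    and xs: "length xs = Suc k"
  shows "T (cobound M k b xs) = cobound N k (\<lambda>ys. T (b ys)) xs"
proof -
  define face where "face i = take (i - 1) xs @ [xs ! (i - 1) + xs ! i] @ drop (i + 1) xs" for i
  let ?terms = "map (\<lambda>i. mscale M ((-1) ^ i) (b (face i))) [1..<k + 1]"
  have "set ?terms \<subseteq> A"
    using xs by (auto simp: face_def intro!: scale_closed b)
  then have sum: "foldr (madd M) ?terms (mzero M) \<in> A"
    "T (foldr (madd M) ?terms (mzero M)) = foldr (madd N) (map T ?terms) (mzero N)"
    using foldr_madd_hom[OF add_closed hom_add _ zero_closed] hom_zero by auto
  have terms: "map T ?terms = map (\<lambda>i. mscale N ((-1) ^ i) (T (b (face i)))) [1..<k + 1]"
    using xs by (auto simp: face_def hom_scale b)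
  have "b (tl xs) \<in> A" "b (take k xs) \<in> A" using xs by (auto intro: b)
  then show ?thesis
    unfolding cobound_def face_def[symmetric]
    using sum terms
    by (simp del: upt_Suc map_map add: hom_add hom_act hom_scale add_closed act_closed scale_closed)
qed

section \<open>Amenable groups have injective comparison maps\<close>

lemma dual_module_abs_le:
  assumes W: "normed_module W" and \<phi>: "\<phi> \<in> mcarr (dual_module W)" and x: "x \<in> mcarr W"
  shows "\<bar>\<phi> x\<bar> \<le> dual_norm W \<phi> * mnorm W x"
proof -
  have scale: "\<forall>a. \<forall>x\<in>mcarr W. \<phi> (mscale W a x) = a * \<phi> x"
    and "\<exists>C. \<forall>x\<in>mcarr W. \<bar>\<phi> x\<bar> \<le> C * mnorm W x"
    using \<phi> by (auto simp: dual_module_def)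
  then obtain C where C: "\<forall>x\<in>mcarr W. \<bar>\<phi> x\<bar> \<le> C * mnorm W x" by blast
  have norm_nonneg: "\<forall>x\<in>mcarr W. 0 \<le> mnorm W x"
    and norm_eq_0: "\<forall>x\<in>mcarr W. mnorm W x = 0 \<longleftrightarrow> x = mzero W"
    and norm_scale: "\<forall>a. \<forall>x\<in>mcarr W. mnorm W (mscale W a x) = \<bar>a\<bar> * mnorm W x"
    and scale_closed: "\<forall>a. \<forall>x\<in>mcarr W. mscale W a x \<in> mcarr W"
    using W unfolding normed_module_def by auto
  define S where "S = {\<bar>\<phi> y\<bar> | y. y \<in> mcarr W \<and> mnorm W y \<le> 1}"
  have "bdd_above S"
    unfolding S_def bdd_above_def
  proof (intro exI[of _ "max C 0"] allI ballI)
    fix t assume "t \<in> {\<bar>\<phi> y\<bar> | y. y \<in> mcarr W \<and> mnorm W y \<le> 1}"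
    then obtain y where y: "y \<in> mcarr W" "mnorm W y \<le> 1" "t = \<bar>\<phi> y\<bar>" by blast
    have "C * mnorm W y \<le> max C 0 * mnorm W y" using norm_nonneg y by (intro mult_right_mono) auto
    also have "\<dots> \<le> max C 0" using y norm_nonneg by (simp add: mult_left_le)
    finally show "t \<le> max C 0" using C y by force
  qed
  show ?thesis
  proof (cases "mnorm W x = 0")
    case True
    have "mscale W 0 x = mzero W" using norm_eq_0 norm_scale scale_closed x by (metis abs_zero mult_zero_left)
    moreover have "x = mzero W" using True norm_eq_0 x by blast
    ultimately have "x = mscale W 0 x" by simp
    then have "\<phi> x = 0" using scale x by (metis mult_zero_left)
    then show ?thesis using True by simp
  next
    case False
    define n where "n = mnorm W x"
    have "n > 0" using False norm_nonneg x n_def by force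
    have "mscale W (1 / n) x \<in> mcarr W" "mnorm W (mscale W (1 / n) x) = 1"
      using scale_closed norm_scale x \<open>n > 0\<close> unfolding n_def by auto
    moreover have "\<phi> (mscale W (1 / n) x) = \<phi> x / n" using scale x by simp
    ultimately have "\<bar>\<phi> x\<bar> / n \<in> S" unfolding S_def using \<open>n > 0\<close> by force
    then have "\<bar>\<phi> x\<bar> / n \<le> dual_norm W \<phi>"
      using \<open>bdd_above S\<close> unfolding dual_norm_def S_def by (simp add: cSup_upper)
    then show ?thesis using \<open>n > 0\<close> n_def by (simp add: divide_le_eq mult.commute)
  qed
qed

definition pointwise_bdd :: "('g \<Rightarrow> 'w \<Rightarrow> real) \<Rightarrow> bool" where
  "pointwise_bdd f \<longleftrightarrow> (\<forall>w. bdd_real_fun (\<lambda>h. f h w))"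

locale invariant_mean =
  fixes m :: "('g::group_add \<Rightarrow> real) \<Rightarrow> real"
  assumes mean_add: "\<And>f f'. bdd_real_fun f \<Longrightarrow> bdd_real_fun f' \<Longrightarrow> m (\<lambda>h. f h + f' h) = m f + m f'"
    and mean_scale: "\<And>a f. bdd_real_fun f \<Longrightarrow> m (\<lambda>h. a * f h) = a * m f"
    and mean_const: "\<And>c. m (\<lambda>h. c) = c"
    and mean_nonneg: "\<And>f. bdd_real_fun f \<Longrightarrow> (\<forall>h. 0 \<le> f h) \<Longrightarrow> 0 \<le> m f"
    and mean_translate: "\<And>g f. bdd_real_fun f \<Longrightarrow> m (\<lambda>h. f ((- g) + h)) = m f"

lemma amenable_iff_invariant_mean:
  "amenable (G :: 'g::group_add itself) \<longleftrightarrow> (\<exists>m :: ('g \<Rightarrow> real) \<Rightarrow> real. invariant_mean m)"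
  unfolding amenable_def invariant_mean_def by blast

lemma linf_dual_abs_le:
  assumes W: "normed_module W" and f: "f \<in> mcarr (linf_module (dual_module W) (dual_norm W))"
  obtains C where "\<And>h w. w \<in> mcarr W \<Longrightarrow> \<bar>f h w\<bar> \<le> C * mnorm W w"
proof -
  have fh: "\<forall>h. f h \<in> mcarr (dual_module W)" and "\<exists>C. \<forall>h. dual_norm W (f h) \<le> C"
    using f by (auto simp: linf_module_def)
  then obtain C where C: "\<forall>h. dual_norm W (f h) \<le> C" by blast
  have "\<bar>f h w\<bar> \<le> C * mnorm W w" if w: "w \<in> mcarr W" for h w
  proof -
    have "0 \<le> mnorm W w" using W w unfolding normed_module_def by auto
    then show ?thesis
      using dual_module_abs_le[OF W fh[rule_format, of h] w] C[rule_format, of h]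
      by (meson mult_right_mono order_trans)
  qed
  then show ?thesis using that by blast
qed

lemma pointwise_bdd_linf_dual:
  assumes W: "normed_module W" and f: "f \<in> mcarr (linf_module (dual_module W) (dual_norm W))"
  shows "pointwise_bdd f"
  unfolding pointwise_bdd_def
proof
  fix w
  obtain C where C: "\<And>h w. w \<in> mcarr W \<Longrightarrow> \<bar>f h w\<bar> \<le> C * mnorm W w"
    using linf_dual_abs_le[OF W f] by blast
  show "bdd_real_fun (\<lambda>h. f h w)"
  proof (cases "w \<in> mcarr W")
    case True
    then show ?thesis using C unfolding bdd_real_fun_def by blast
  next
    case False
    then have "f h w = 0" for h using f by (auto simp: linf_module_def dual_module_def)
    then show ?thesis unfolding bdd_real_fun_def by auto
  qed
qed

lemma pointwise_bdd_linf_dual_ops: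
  fixes nv :: "('w \<Rightarrow> real) \<Rightarrow> real" and W :: "('g::group_add, 'w) nmod"
  assumes "pointwise_bdd f" "pointwise_bdd f'"
  shows "pointwise_bdd (madd (linf_module (dual_module W) nv) f f')"
    and "pointwise_bdd (mscale (linf_module (dual_module W) nv) a f)"
    and "pointwise_bdd (mact (linf_module (dual_module W) nv) g f)"
proof -
  have "bdd_real_fun (\<lambda>h. f h w)" "bdd_real_fun (\<lambda>h. f' h w)" for w
    using assms unfolding pointwise_bdd_def by auto
  moreover have "bdd_real_fun (\<lambda>h. if w \<in> mcarr W then f ((- g) + h) (mact W (- g) w) else 0)" for w
    using bdd_real_fun_comp[OF \<open>bdd_real_fun (\<lambda>h. f h (mact W (- g) w))\<close>] bdd_real_fun_const[of 0]
    by (cases "w \<in> mcarr W") auto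
  ultimately show "pointwise_bdd (madd (linf_module (dual_module W) nv) f f')"
    and "pointwise_bdd (mscale (linf_module (dual_module W) nv) a f)"
    and "pointwise_bdd (mact (linf_module (dual_module W) nv) g f)"
    unfolding pointwise_bdd_def
    by (auto simp: linf_module_def dual_module_def
        intro: bdd_real_fun_add bdd_real_fun_scale)
qed

lemma pointwise_bdd_linf_zero: "pointwise_bdd (mzero (linf_module V nv))"
  unfolding pointwise_bdd_def by (simp add: linf_module_def bdd_real_fun_const)

context invariant_mean
begin

lemma mean_abs_le:
  assumes "\<And>h. \<bar>u h\<bar> \<le> B" shows "\<bar>m u\<bar> \<le> B"
proof -
  have u: "bdd_real_fun u" using assms unfolding bdd_real_fun_def by blast
  have upper: "m (\<lambda>h. B - u h) = B - m u"
    using mean_add[OF bdd_real_fun_const bdd_real_fun_scale[OF u, of "-1"]] mean_scale[OF u, of "-1"]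
      mean_const by simp
  have lower: "m (\<lambda>h. B + u h) = B + m u"
    using mean_add[OF bdd_real_fun_const u] mean_const by simp
  have "bdd_real_fun (\<lambda>h. B - u h)" "bdd_real_fun (\<lambda>h. B + u h)"
    using u by (auto intro!: bdd_real_fun_add bdd_real_fun_diff bdd_real_fun_const)
  moreover have "0 \<le> B - u h" "0 \<le> B + u h" for h
    using assms[of h] by (auto simp: abs_le_iff)
  ultimately have "0 \<le> B - m u" "0 \<le> B + m u"
    using mean_nonneg upper lower by metis+
  then show ?thesis by linarith
qed

definition dual_average :: "('g, 'w) nmod \<Rightarrow> ('g \<Rightarrow> 'w \<Rightarrow> real) \<Rightarrow> 'w \<Rightarrow> real" where
  "dual_average W f = (\<lambda>w. if w \<in> mcarr W then m (\<lambda>h. f h w) else 0)"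

lemma dual_average_ops:
  fixes nv :: "('w \<Rightarrow> real) \<Rightarrow> real" and W :: "('g, 'w) nmod"
  assumes f: "pointwise_bdd f" and f': "pointwise_bdd f'"
  shows "dual_average W (madd (linf_module (dual_module W) nv) f f') =
           madd (dual_module W) (dual_average W f) (dual_average W f')"
    and "dual_average W (mscale (linf_module (dual_module W) nv) a f) =
           mscale (dual_module W) a (dual_average W f)"
  using assms unfolding dual_average_def pointwise_bdd_def
  by (auto simp: linf_module_def dual_module_def mean_add mean_scale)

lemma dual_average_zero:
  "dual_average W (mzero (linf_module (dual_module W) nv)) = mzero (dual_module W)"
  unfolding dual_average_def by (auto simp: linf_module_def dual_module_def mean_const)

lemma dual_average_act:
  assumes W: "normed_module W" and f: "pointwise_bdd f"
  shows "dual_average W (mact (linf_module (dual_module W) nv) g f) =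
           mact (dual_module W) g (dual_average W f)"
proof
  fix w
  show "dual_average W (mact (linf_module (dual_module W) nv) g f) w =
          mact (dual_module W) g (dual_average W f) w"
  proof (cases "w \<in> mcarr W")
    case True
    have "mact W (- g) w \<in> mcarr W" using W True unfolding normed_module_def by auto
    moreover have "bdd_real_fun (\<lambda>h. f h (mact W (- g) w))" using f unfolding pointwise_bdd_def by blast
    ultimately show ?thesis
      using True mean_translate unfolding dual_average_def by (simp add: linf_module_def dual_module_def)
  qed (simp add: dual_average_def dual_module_def)
qed

lemma dual_average_const: "v \<in> mcarr (dual_module W) \<Longrightarrow> dual_average W (\<lambda>h. v) = v"
  unfolding dual_average_def by (auto simp: mean_const dual_module_def)

lemma dual_average_in_dual:
  assumes W: "normed_module W" and f: "f \<in> mcarr (linf_module (dual_module W) (dual_norm W))"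
  shows "dual_average W f \<in> mcarr (dual_module W)"
proof -
  obtain C where C: "\<And>h w. w \<in> mcarr W \<Longrightarrow> \<bar>f h w\<bar> \<le> C * mnorm W w"
    using linf_dual_abs_le[OF W f] by blast
  have bdd: "bdd_real_fun (\<lambda>h. f h x)" for x
    using pointwise_bdd_linf_dual[OF W f] unfolding pointwise_bdd_def by blast
  have closed: "\<forall>x\<in>mcarr W. \<forall>y\<in>mcarr W. madd W x y \<in> mcarr W"
    "\<forall>a. \<forall>x\<in>mcarr W. mscale W a x \<in> mcarr W"
    using W unfolding normed_module_def by auto
  have linear: "\<forall>x\<in>mcarr W. \<forall>y\<in>mcarr W. f h (madd W x y) = f h x + f h y"
    "\<forall>a. \<forall>x\<in>mcarr W. f h (mscale W a x) = a * f h x" for h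
    using f by (auto simp: linf_module_def dual_module_def)
  show ?thesis
    unfolding dual_module_def
  proof (simp, intro conjI ballI allI)
    fix x y assume "x \<in> mcarr W" "y \<in> mcarr W"
    then show "dual_average W f (madd W x y) = dual_average W f x + dual_average W f y"
      using closed linear mean_add[OF bdd bdd] unfolding dual_average_def by simp
  next
    fix a x assume "x \<in> mcarr W"
    then show "dual_average W f (mscale W a x) = a * dual_average W f x"
      using closed linear mean_scale[OF bdd] unfolding dual_average_def by simp
  next
    have "\<bar>dual_average W f w\<bar> \<le> C * mnorm W w" if "w \<in> mcarr W" for w
      using C[OF that] that unfolding dual_average_def by (simp add: mean_abs_le)
    then show "\<exists>C. \<forall>x\<in>mcarr W. \<bar>dual_average W f x\<bar> \<le> C * mnorm W x" by blast
  qed (auto simp: dual_average_def)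
qed

lemma dual_average_cobound:
  assumes W: "normed_module W" and b: "cochain (linf_module (dual_module W) (dual_norm W)) j b"
    and xs: "length xs = Suc j"
  shows "dual_average W (cobound (linf_module (dual_module W) (dual_norm W)) j b xs) =
         cobound (dual_module W) j (\<lambda>ys. dual_average W (b ys)) xs"
proof (rule cobound_hom[where A = "Collect pointwise_bdd"])
  show "\<And>ys. length ys = j \<Longrightarrow> b ys \<in> Collect pointwise_bdd"
    using pointwise_bdd_linf_dual[OF W] b unfolding cochain_def by blast
qed (use xs in \<open>auto simp: pointwise_bdd_linf_dual_ops pointwise_bdd_linf_zero
    dual_average_ops dual_average_zero dual_average_act[OF W]\<close>)

theorem comparison_injective_dual:
  fixes W :: "('g, 'w) nmod"
  assumes W: "normed_module W"
  shows "comparison_injective (dual_module W) (dual_norm W) k"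
  unfolding comparison_injective_def
proof (intro allI impI, elim conjE)
  let ?L = "linf_module (dual_module W) (dual_norm W)"
  fix c
  assume cocycle: "cocycle (dual_module W) k c" and coboundary: "coboundary ?L k (\<lambda>xs h. c xs)"
  show "coboundary (dual_module W) k c"
  proof (cases k)
    case 0
    with coboundary show ?thesis
      by (simp add: coboundary_def linf_module_def dual_module_def fun_eq_iff)
  next
    case (Suc j)
    then obtain b where b: "cochain ?L j b"
      and c_eq: "\<And>xs. length xs = Suc j \<Longrightarrow> (\<lambda>h. c xs) = cobound ?L j b xs"
      using coboundary by (auto simp: coboundary_def)
    have "cochain (dual_module W) j (\<lambda>ys. dual_average W (b ys))"
      using b dual_average_in_dual[OF W] unfolding cochain_def by blast
    moreover have "c xs = cobound (dual_module W) j (\<lambda>ys. dual_average W (b ys)) xs"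
      if xs: "length xs = Suc j" for xs
    proof -
      have "c xs \<in> mcarr (dual_module W)"
        using cocycle xs Suc unfolding cocycle_def cochain_def by blast
      then have "c xs = dual_average W (\<lambda>h. c xs)" by (simp add: dual_average_const)
      also have "\<dots> = dual_average W (cobound ?L j b xs)" using c_eq[OF xs] by simp
      also have "\<dots> = cobound (dual_module W) j (\<lambda>ys. dual_average W (b ys)) xs"
        by (rule dual_average_cobound[OF W b xs])
      finally show ?thesis .
    qed
    ultimately show ?thesis using Suc by (auto simp: coboundary_def)
  qed
qed

end

section \<open>The module of bounded functions modulo constants\<close>

definition osc :: "('g \<Rightarrow> real) \<Rightarrow> real" where
  "osc f = Sup {\<bar>f x - f y\<bar> | x y. True}"

lemma osc_upper:
  assumes "bdd_real_fun f" shows "\<bar>f x - f y\<bar> \<le> osc f"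
proof -
  obtain C where C: "\<forall>h. \<bar>f h\<bar> \<le> C" using assms unfolding bdd_real_fun_def by blast
  have "\<bar>f x - f y\<bar> \<le> C + C" for x y
    using C[rule_format, of x] C[rule_format, of y] by linarith
  then have "bdd_above {\<bar>f x - f y\<bar> | x y. True}" unfolding bdd_above_def by blast
  then show ?thesis unfolding osc_def by (rule cSup_upper[rotated]) blast
qed

lemma osc_least: "(\<And>x y. \<bar>f x - f y\<bar> \<le> M) \<Longrightarrow> osc f \<le> M"
  unfolding osc_def by (rule cSup_least) auto

lemma osc_nonneg: "bdd_real_fun f \<Longrightarrow> 0 \<le> osc f"
  using osc_upper[of f undefined undefined] by simp

lemma osc_le_double_bound:
  assumes "\<And>x. \<bar>f x\<bar> \<le> C" shows "osc f \<le> 2 * C"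
proof (rule osc_least)
  fix x y show "\<bar>f x - f y\<bar> \<le> 2 * C"
    using assms[of x] assms[of y] abs_triangle_ineq4[of "f x" "f y"] by linarith
qed

lemma osc_eq_0_iff:
  assumes "bdd_real_fun f" "f 0 = 0" shows "osc f = 0 \<longleftrightarrow> f = (\<lambda>x. 0)"
proof
  assume "osc f = 0"
  show "f = (\<lambda>x. 0)"
  proof
    fix x show "f x = 0" using osc_upper[OF assms(1), of x 0] \<open>osc f = 0\<close> assms(2) by simp
  qed
next
  assume "f = (\<lambda>x. 0)"
  then show "osc f = 0" using osc_least[of f 0] osc_nonneg[OF assms(1)] by simp
qed

lemma osc_scale_le:
  assumes "bdd_real_fun f" shows "osc (\<lambda>x. a * f x) \<le> \<bar>a\<bar> * osc f"
proof (rule osc_least)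
  fix x y
  have "\<bar>a * f x - a * f y\<bar> = \<bar>a\<bar> * \<bar>f x - f y\<bar>"
    by (simp add: abs_mult[symmetric] right_diff_distrib)
  also have "\<dots> \<le> \<bar>a\<bar> * osc f" by (rule mult_left_mono[OF osc_upper[OF assms]]) simp
  finally show "\<bar>a * f x - a * f y\<bar> \<le> \<bar>a\<bar> * osc f" .
qed

lemma osc_scale:
  assumes f: "bdd_real_fun f" shows "osc (\<lambda>x. a * f x) = \<bar>a\<bar> * osc f"
proof (cases "a = 0")
  case True
  have "osc (\<lambda>x. 0 * f x) \<le> 0" using osc_scale_le[OF f, of 0] by simp
  moreover have "0 \<le> osc (\<lambda>x. 0 * f x)" by (rule osc_nonneg[OF bdd_real_fun_scale[OF f]])
  ultimately show ?thesis using True by simp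
next
  case False
  have "osc f = osc (\<lambda>x. (1 / a) * (a * f x))" using False by simp
  also have "\<dots> \<le> \<bar>1 / a\<bar> * osc (\<lambda>x. a * f x)"
    by (rule osc_scale_le[OF bdd_real_fun_scale[OF f]])
  finally have "\<bar>a\<bar> * osc f \<le> osc (\<lambda>x. a * f x)"
    using False by (simp add: field_simps)
  then show ?thesis using osc_scale_le[OF f, of a] by simp
qed

lemma osc_add:
  assumes "bdd_real_fun f" "bdd_real_fun g" shows "osc (\<lambda>x. f x + g x) \<le> osc f + osc g"
proof (rule osc_least)
  fix x y
  have "\<bar>f x - f y\<bar> \<le> osc f" "\<bar>g x - g y\<bar> \<le> osc g" using assms by (auto intro: osc_upper)
  then show "\<bar>f x + g x - (f y + g y)\<bar> \<le> osc f + osc g" by linarith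
qed

definition normalized_translate :: "'g::group_add \<Rightarrow> ('g \<Rightarrow> real) \<Rightarrow> 'g \<Rightarrow> real" where
  "normalized_translate g f = (\<lambda>x. f (- g + x) - f (- g))"

lemma bdd_real_fun_norm_translate: "bdd_real_fun f \<Longrightarrow> bdd_real_fun (normalized_translate g f)"
  unfolding normalized_translate_def by (rule bdd_real_fun_diff[OF bdd_real_fun_comp bdd_real_fun_const])

lemma normalized_translate_0: "f 0 = 0 \<Longrightarrow> normalized_translate 0 f = f"
  by (simp add: normalized_translate_def)

lemma normalized_translate_add: "normalized_translate (g + h) f = normalized_translate g (normalized_translate h f)"
  by (simp add: normalized_translate_def minus_add add.assoc[symmetric])

lemma osc_norm_translate:
  assumes f: "bdd_real_fun f" shows "osc (normalized_translate g f) = osc f"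
proof (rule antisym)
  show "osc (normalized_translate g f) \<le> osc f"
    by (rule osc_least) (simp add: normalized_translate_def osc_upper[OF f])
  show "osc f \<le> osc (normalized_translate g f)"
  proof (rule osc_least)
    fix x y
    have "\<bar>f x - f y\<bar> = \<bar>normalized_translate g f (g + x) - normalized_translate g f (g + y)\<bar>"
      by (simp add: normalized_translate_def add.assoc[symmetric])
    then show "\<bar>f x - f y\<bar> \<le> osc (normalized_translate g f)"
      using osc_upper[OF bdd_real_fun_norm_translate[OF f]] by simp
  qed
qed

text \<open>The module \<open>\<ell>\<^sup>\<infinity>(G)/\<real>\<close>: every class is represented by its member vanishing at \<open>0\<close>,
  wrapped as a singleton set to fit the carrier type fixed by the theorem. The oscillation is
  twice the quotient norm.\<close>

definition osc_module :: "('g::group_add, ('g \<Rightarrow> real) set) nmod" where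
  "osc_module = \<lparr> mcarr = {{f} | f. bdd_real_fun f \<and> f 0 = 0},
          madd = (\<lambda>A B. {\<lambda>x. the_elem A x + the_elem B x}),
          mscale = (\<lambda>a A. {\<lambda>x. a * the_elem A x}),
          mzero = {\<lambda>x. 0},
          mact = (\<lambda>g A. {normalized_translate g (the_elem A)}),
          mnorm = (\<lambda>A. osc (the_elem A)) \<rparr>"

lemma osc_module_simps:
  "mcarr osc_module = {{f} | f. bdd_real_fun f \<and> f 0 = 0}"
  "madd osc_module {f} {g} = {\<lambda>x. f x + g x}"
  "mscale osc_module a {f} = {\<lambda>x. a * f x}"
  "mzero osc_module = {\<lambda>x. 0}"
  "mact osc_module h {f} = {normalized_translate h f}"
  "mnorm osc_module {f} = osc f"
  by (simp_all add: osc_module_def)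

lemma mcarr_osc_module_iff:
  "A \<in> mcarr osc_module \<longleftrightarrow> (\<exists>f. A = {f} \<and> bdd_real_fun f \<and> f 0 = 0)"
  by (auto simp: osc_module_simps)

lemma normed_module_osc_module: "normed_module osc_module"
  unfolding normed_module_def osc_module_simps(1)
  apply (intro conjI)
  subgoal by (auto simp: osc_module_simps bdd_real_fun_const)
  subgoal by (auto simp: osc_module_simps bdd_real_fun_add)
  subgoal by (auto simp: osc_module_simps bdd_real_fun_scale)
  subgoal by (auto simp: osc_module_simps add.assoc)
  subgoal by (auto simp: osc_module_simps add.commute)
  subgoal by (auto simp: osc_module_simps)
  subgoal by (auto simp: osc_module_simps)
  subgoal by (auto simp: osc_module_simps distrib_right)
  subgoal by (auto simp: osc_module_simps distrib_left)
  subgoal by (auto simp: osc_module_simps mult.assoc)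
  subgoal by (auto simp: osc_module_simps)
  subgoal by (auto simp: osc_module_simps osc_nonneg)
  subgoal by (auto simp: osc_module_simps osc_eq_0_iff)
  subgoal by (auto simp: osc_module_simps osc_scale)
  subgoal by (auto simp: osc_module_simps osc_add)
  subgoal by (auto simp: osc_module_simps bdd_real_fun_norm_translate) (simp add: normalized_translate_def)
  subgoal by (auto simp: osc_module_simps normalized_translate_def fun_eq_iff)
  subgoal by (auto simp: osc_module_simps normalized_translate_def right_diff_distrib)
  subgoal by (auto simp: osc_module_simps osc_norm_translate)
  subgoal by (auto simp: osc_module_simps normalized_translate_0)
  subgoal by (auto simp: osc_module_simps normalized_translate_add)
  done

section \<open>Invariant means from invariant functionals\<close>

definition nonneg_bdd :: "('g \<Rightarrow> real) \<Rightarrow> bool" where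
  "nonneg_bdd F \<longleftrightarrow> bdd_real_fun F \<and> (\<forall>x. 0 \<le> F x)"

lemma nonneg_bdd_add: "nonneg_bdd F \<Longrightarrow> nonneg_bdd F' \<Longrightarrow> nonneg_bdd (\<lambda>x. F x + F' x)"
  unfolding nonneg_bdd_def by (auto intro: bdd_real_fun_add)

lemma nonneg_bdd_scale: "nonneg_bdd F \<Longrightarrow> 0 \<le> a \<Longrightarrow> nonneg_bdd (\<lambda>x. a * F x)"
  unfolding nonneg_bdd_def by (auto intro: bdd_real_fun_scale)

lemma nonneg_bdd_const: "0 \<le> c \<Longrightarrow> nonneg_bdd (\<lambda>x. c)"
  unfolding nonneg_bdd_def by (auto intro: bdd_real_fun_const)

lemma nonneg_bdd_translate: "nonneg_bdd F \<Longrightarrow> nonneg_bdd (\<lambda>x. F (g + x))"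
  unfolding nonneg_bdd_def using bdd_real_fun_comp[of F "\<lambda>x. g + x"] by simp

lemma nonneg_bdd_shift:
  assumes "bdd_real_fun F" obtains c where "0 \<le> c" "nonneg_bdd (\<lambda>x. F x + c)"
proof -
  obtain C where C: "\<forall>h. \<bar>F h\<bar> \<le> C" using assms unfolding bdd_real_fun_def by blast
  have "0 \<le> C" using C[rule_format, of undefined] by simp
  moreover have "0 \<le> F x + C" for x using C[rule_format, of x] by linarith
  moreover have "bdd_real_fun (\<lambda>x. F x + C)" by (rule bdd_real_fun_add[OF assms bdd_real_fun_const])
  ultimately show ?thesis using that unfolding nonneg_bdd_def by blast
qed

text \<open>\<open>\<mu>\<close> need not be positive. Its positive part in the Jordan decomposition,
  \<open>\<mu>\<^sup>+(F) = sup {\<mu>(H) | 0 \<le> H \<le> F}\<close>, is again invariant and satisfies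
  \<open>\<mu>\<^sup>+(1) \<ge> \<mu>(1) = 1\<close>, so \<open>\<mu>\<^sup>+ / \<mu>\<^sup>+(1)\<close> is an invariant mean.\<close>

locale invariant_functional =
  fixes \<mu> :: "('g::group_add \<Rightarrow> real) \<Rightarrow> real"
  assumes fun_add: "\<And>f f'. bdd_real_fun f \<Longrightarrow> bdd_real_fun f' \<Longrightarrow> \<mu> (\<lambda>h. f h + f' h) = \<mu> f + \<mu> f'"
    and fun_scale: "\<And>a f. bdd_real_fun f \<Longrightarrow> \<mu> (\<lambda>h. a * f h) = a * \<mu> f"
    and fun_one: "\<mu> (\<lambda>h. 1) = 1"
    and fun_translate: "\<And>g f. bdd_real_fun f \<Longrightarrow> \<mu> (\<lambda>x. f (g + x)) = \<mu> f"
    and fun_bounded: "\<exists>K. \<forall>F B. bdd_real_fun F \<longrightarrow> (\<forall>x. \<bar>F x\<bar> \<le> B) \<longrightarrow> \<bar>\<mu> F\<bar> \<le> K * B"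
begin

definition minorants :: "('g \<Rightarrow> real) \<Rightarrow> ('g \<Rightarrow> real) set" where
  "minorants F = {H. bdd_real_fun H \<and> (\<forall>x. 0 \<le> H x \<and> H x \<le> F x)}"

definition pos_part :: "('g \<Rightarrow> real) \<Rightarrow> real" where
  "pos_part F = Sup (\<mu> ` minorants F)"

lemma fun_zero: "\<mu> (\<lambda>h. 0) = 0"
  using fun_scale[OF bdd_real_fun_const, of 0 1] by simp

lemma zero_in_minorants: "nonneg_bdd F \<Longrightarrow> (\<lambda>x. 0) \<in> minorants F"
  unfolding minorants_def nonneg_bdd_def by (auto intro: bdd_real_fun_const)

lemma bdd_above_minorants:
  assumes "nonneg_bdd F" shows "bdd_above (\<mu> ` minorants F)"
proof -
  obtain K where K: "\<forall>F B. bdd_real_fun F \<longrightarrow> (\<forall>x. \<bar>F x\<bar> \<le> B) \<longrightarrow> \<bar>\<mu> F\<bar> \<le> K * B"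
    using fun_bounded by blast
  obtain B where B: "\<forall>x. \<bar>F x\<bar> \<le> B" using assms unfolding nonneg_bdd_def bdd_real_fun_def by blast
  have "\<mu> H \<le> K * B" if "H \<in> minorants F" for H
  proof -
    have "\<forall>x. \<bar>H x\<bar> \<le> B" using that B unfolding minorants_def by (smt (verit) mem_Collect_eq)
    then have "\<bar>\<mu> H\<bar> \<le> K * B" using K that unfolding minorants_def by blast
    then show ?thesis by simp
  qed
  then show ?thesis unfolding bdd_above_def by blast
qed

lemma pos_part_upper: "nonneg_bdd F \<Longrightarrow> H \<in> minorants F \<Longrightarrow> \<mu> H \<le> pos_part F"
  unfolding pos_part_def by (rule cSup_upper) (auto intro: bdd_above_minorants)

lemma pos_part_least:
  "nonneg_bdd F \<Longrightarrow> (\<And>H. H \<in> minorants F \<Longrightarrow> \<mu> H \<le> M) \<Longrightarrow> pos_part F \<le> M"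
  unfolding pos_part_def by (rule cSup_least) (auto dest: zero_in_minorants)

lemma pos_part_nonneg: "nonneg_bdd F \<Longrightarrow> 0 \<le> pos_part F"
  using pos_part_upper[OF _ zero_in_minorants] fun_zero by fastforce

lemma pos_part_one_ge_1: "1 \<le> pos_part (\<lambda>x. 1)"
proof -
  have "(\<lambda>x. 1) \<in> minorants (\<lambda>x. 1)" unfolding minorants_def by (auto intro: bdd_real_fun_const)
  from pos_part_upper[OF nonneg_bdd_const this] show ?thesis using fun_one by simp
qed

text \<open>Splitting a minorant \<open>H\<close> of \<open>F + F'\<close> as \<open>min H F + (H - min H F)\<close> gives \<open>\<le>\<close>.\<close>

lemma pos_part_add:
  assumes F: "nonneg_bdd F" and F': "nonneg_bdd F'"
  shows "pos_part (\<lambda>x. F x + F' x) = pos_part F + pos_part F'"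
proof (rule antisym)
  have FF: "nonneg_bdd (\<lambda>x. F x + F' x)" using nonneg_bdd_add[OF F F'] .
  show "pos_part (\<lambda>x. F x + F' x) \<le> pos_part F + pos_part F'"
  proof (rule pos_part_least[OF FF])
    fix H assume H: "H \<in> minorants (\<lambda>x. F x + F' x)"
    define H1 where "H1 = (\<lambda>x. min (H x) (F x))"
    define H2 where "H2 = (\<lambda>x. H x - H1 x)"
    have H1: "H1 \<in> minorants F"
      using H F unfolding minorants_def H1_def nonneg_bdd_def by (auto intro: bdd_real_fun_min)
    have H2: "H2 \<in> minorants F'"
      using H F F' H1 unfolding minorants_def H2_def H1_def nonneg_bdd_def
      by (auto intro!: bdd_real_fun_diff bdd_real_fun_min simp: min_def) (smt (verit))
    have "bdd_real_fun H1" "bdd_real_fun H2" using H1 H2 unfolding minorants_def by auto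
    moreover have "H = (\<lambda>x. H1 x + H2 x)" unfolding H2_def by simp
    ultimately have "\<mu> H = \<mu> H1 + \<mu> H2" using fun_add by metis
    then show "\<mu> H \<le> pos_part F + pos_part F'"
      using pos_part_upper[OF F H1] pos_part_upper[OF F' H2] by linarith
  qed
  have sum: "\<mu> H + \<mu> H' \<le> pos_part (\<lambda>x. F x + F' x)"
    if "H \<in> minorants F" "H' \<in> minorants F'" for H H'
  proof -
    have "(\<lambda>x. H x + H' x) \<in> minorants (\<lambda>x. F x + F' x)"
      using that unfolding minorants_def by (auto intro: bdd_real_fun_add add_mono)
    then have "\<mu> (\<lambda>x. H x + H' x) \<le> pos_part (\<lambda>x. F x + F' x)" by (rule pos_part_upper[OF FF])
    then show ?thesis using fun_add that unfolding minorants_def by auto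
  qed
  have "\<mu> H' \<le> pos_part (\<lambda>x. F x + F' x) - pos_part F" if "H' \<in> minorants F'" for H'
  proof -
    have "pos_part F \<le> pos_part (\<lambda>x. F x + F' x) - \<mu> H'"
      by (rule pos_part_least[OF F]) (use sum that in fastforce)
    then show ?thesis by linarith
  qed
  then have "pos_part F' \<le> pos_part (\<lambda>x. F x + F' x) - pos_part F" by (rule pos_part_least[OF F'])
  then show "pos_part F + pos_part F' \<le> pos_part (\<lambda>x. F x + F' x)" by linarith
qed

lemma pos_part_scale_le:
  assumes F: "nonneg_bdd F" and a: "0 < a" shows "pos_part (\<lambda>x. a * F x) \<le> a * pos_part F"
proof (rule pos_part_least[OF nonneg_bdd_scale[OF F]])
  show "0 \<le> a" using a by simp
  fix H assume H: "H \<in> minorants (\<lambda>x. a * F x)"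
  then have "bdd_real_fun H" unfolding minorants_def by blast
  have "(\<lambda>x. (1 / a) * H x) \<in> minorants F"
    using H a bdd_real_fun_scale[OF \<open>bdd_real_fun H\<close>, of "1 / a"] unfolding minorants_def
    by (auto simp: field_simps)
  then have "\<mu> (\<lambda>x. (1 / a) * H x) \<le> pos_part F" by (rule pos_part_upper[OF F])
  then have "\<mu> H / a \<le> pos_part F" using fun_scale[OF \<open>bdd_real_fun H\<close>, of "1 / a"] by simp
  then show "\<mu> H \<le> a * pos_part F" using a by (simp add: pos_divide_le_eq mult.commute)
qed

lemma pos_part_zero: "pos_part (\<lambda>x. 0) = 0"
proof (rule antisym)
  show "pos_part (\<lambda>x. 0) \<le> 0"
  proof (rule pos_part_least[OF nonneg_bdd_const])
    fix H assume "H \<in> minorants (\<lambda>x. 0)"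
    then have "H = (\<lambda>x. 0)" unfolding minorants_def by (auto intro: antisym)
    then show "\<mu> H \<le> 0" using fun_zero by simp
  qed simp
  show "0 \<le> pos_part (\<lambda>x. 0)" by (rule pos_part_nonneg[OF nonneg_bdd_const]) simp
qed

lemma pos_part_scale:
  assumes F: "nonneg_bdd F" and a: "0 \<le> a" shows "pos_part (\<lambda>x. a * F x) = a * pos_part F"
proof (cases "a = 0")
  case True
  then show ?thesis using pos_part_zero by simp
next
  case False
  with a have "0 < a" by simp
  have "pos_part F = pos_part (\<lambda>x. (1 / a) * (a * F x))" using \<open>0 < a\<close> by simp
  also have "\<dots> \<le> (1 / a) * pos_part (\<lambda>x. a * F x)"
    using \<open>0 < a\<close> by (intro pos_part_scale_le nonneg_bdd_scale[OF F a]) simp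
  finally have "a * pos_part F \<le> pos_part (\<lambda>x. a * F x)" using \<open>0 < a\<close> by (simp add: field_simps)
  then show ?thesis using pos_part_scale_le[OF F \<open>0 < a\<close>] by simp
qed

lemma pos_part_translate_le:
  assumes F: "nonneg_bdd F" shows "pos_part (\<lambda>x. F (g + x)) \<le> pos_part F"
proof (rule pos_part_least[OF nonneg_bdd_translate[OF F]])
  fix H assume H: "H \<in> minorants (\<lambda>x. F (g + x))"
  define H' where "H' = (\<lambda>x. H (- g + x))"
  have "bdd_real_fun H'"
    using H bdd_real_fun_comp[of H "\<lambda>x. - g + x"] unfolding minorants_def H'_def by simp
  moreover have "0 \<le> H' x \<and> H' x \<le> F x" for x
  proof -
    have "0 \<le> H (- g + x) \<and> H (- g + x) \<le> F (g + (- g + x))" using H unfolding minorants_def by blast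
    then show ?thesis unfolding H'_def by (simp add: add.assoc[symmetric])
  qed
  ultimately have "H' \<in> minorants F" unfolding minorants_def by blast
  then have "\<mu> H' \<le> pos_part F" by (rule pos_part_upper[OF F])
  moreover have "\<mu> (\<lambda>x. H' (g + x)) = \<mu> H'"
    using \<open>H' \<in> minorants F\<close> fun_translate unfolding minorants_def by blast
  moreover have "(\<lambda>x. H' (g + x)) = H" unfolding H'_def by (simp add: add.assoc[symmetric])
  ultimately show "\<mu> H \<le> pos_part F" by simp
qed

lemma pos_part_translate:
  assumes F: "nonneg_bdd F" shows "pos_part (\<lambda>x. F (g + x)) = pos_part F"
proof (rule antisym[OF pos_part_translate_le[OF F]])
  have "pos_part (\<lambda>x. F (g + (- g + x))) \<le> pos_part (\<lambda>x. F (g + x))"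
    by (rule pos_part_translate_le[OF nonneg_bdd_translate[OF F]])
  then show "pos_part F \<le> pos_part (\<lambda>x. F (g + x))" by (simp add: add.assoc[symmetric])
qed

text \<open>The extension of \<open>pos_part\<close> to all bounded functions; by \<open>pos_part_lin_eq\<close> it does
  not depend on the shift picked by \<open>SOME\<close>.\<close>

definition pos_part_lin :: "('g \<Rightarrow> real) \<Rightarrow> real" where
  "pos_part_lin F =
     (let c = SOME c. 0 \<le> c \<and> nonneg_bdd (\<lambda>x. F x + c) in pos_part (\<lambda>x. F x + c) - c * pos_part (\<lambda>x. 1))"

lemma pos_part_const: "0 \<le> c \<Longrightarrow> pos_part (\<lambda>x. c) = c * pos_part (\<lambda>x. 1)"
  using pos_part_scale[OF nonneg_bdd_const[of 1], of c] by simp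

lemma pos_part_lin_eq:
  assumes c: "0 \<le> c" "nonneg_bdd (\<lambda>x. F x + c)"
  shows "pos_part_lin F = pos_part (\<lambda>x. F x + c) - c * pos_part (\<lambda>x. 1)"
proof -
  define d where "d = (SOME c. 0 \<le> c \<and> nonneg_bdd (\<lambda>x. F x + c))"
  have d: "0 \<le> d" "nonneg_bdd (\<lambda>x. F x + d)"
    using someI[of "\<lambda>c. 0 \<le> c \<and> nonneg_bdd (\<lambda>x. F x + c)", OF conjI[OF c]] unfolding d_def by auto
  have "pos_part (\<lambda>x. (F x + d) + c) = pos_part (\<lambda>x. F x + d) + c * pos_part (\<lambda>x. 1)"
    using pos_part_add[OF d(2) nonneg_bdd_const[OF c(1)]] pos_part_const[OF c(1)] by simp
  moreover have "pos_part (\<lambda>x. (F x + c) + d) = pos_part (\<lambda>x. F x + c) + d * pos_part (\<lambda>x. 1)"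
    using pos_part_add[OF c(2) nonneg_bdd_const[OF d(1)]] pos_part_const[OF d(1)] by simp
  moreover have "pos_part (\<lambda>x. (F x + d) + c) = pos_part (\<lambda>x. (F x + c) + d)"
    by (simp add: algebra_simps)
  ultimately show ?thesis unfolding pos_part_lin_def d_def[symmetric] Let_def by linarith
qed

lemma pos_part_lin_add:
  assumes f: "bdd_real_fun f" and f': "bdd_real_fun f'"
  shows "pos_part_lin (\<lambda>h. f h + f' h) = pos_part_lin f + pos_part_lin f'"
proof -
  obtain c c' where c: "0 \<le> c" "nonneg_bdd (\<lambda>x. f x + c)" and c': "0 \<le> c'" "nonneg_bdd (\<lambda>x. f' x + c')"
    using nonneg_bdd_shift[OF f] nonneg_bdd_shift[OF f'] by metis
  have "(\<lambda>x. (f x + f' x) + (c + c')) = (\<lambda>x. (f x + c) + (f' x + c'))" by (simp add: algebra_simps)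
  then have "pos_part_lin (\<lambda>h. f h + f' h) =
      pos_part (\<lambda>x. f x + c) + pos_part (\<lambda>x. f' x + c') - (c + c') * pos_part (\<lambda>x. 1)"
    using pos_part_lin_eq[of "c + c'"] pos_part_add[OF c(2) c'(2)] nonneg_bdd_add[OF c(2) c'(2)] c c'
    by simp
  then show ?thesis using pos_part_lin_eq[OF c] pos_part_lin_eq[OF c'] by (simp add: algebra_simps)
qed

lemma pos_part_lin_nonneg_scale:
  assumes f: "bdd_real_fun f" and a: "0 \<le> a"
  shows "pos_part_lin (\<lambda>h. a * f h) = a * pos_part_lin f"
proof -
  obtain c where c: "0 \<le> c" "nonneg_bdd (\<lambda>x. f x + c)" using nonneg_bdd_shift[OF f] by metis
  have "(\<lambda>x. a * f x + a * c) = (\<lambda>x. a * (f x + c))" by (simp add: algebra_simps)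
  then have "pos_part_lin (\<lambda>h. a * f h) = a * pos_part (\<lambda>x. f x + c) - (a * c) * pos_part (\<lambda>x. 1)"
    using pos_part_lin_eq[of "a * c"] pos_part_scale[OF c(2) a] nonneg_bdd_scale[OF c(2) a] c a
    by simp
  also have "pos_part (\<lambda>x. f x + c) = pos_part_lin f + c * pos_part (\<lambda>x. 1)"
    using pos_part_lin_eq[OF c] by simp
  finally show ?thesis by (simp add: algebra_simps)
qed

lemma pos_part_lin_scale:
  assumes f: "bdd_real_fun f" shows "pos_part_lin (\<lambda>h. a * f h) = a * pos_part_lin f"
proof (cases "0 \<le> a")
  case True
  then show ?thesis using pos_part_lin_nonneg_scale[OF f] by simp
next
  case False
  have minus_f: "bdd_real_fun (\<lambda>h. - f h)" using bdd_real_fun_scale[OF f, of "-1"] by simp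
  have "pos_part_lin (\<lambda>h. f h + - f h) = pos_part_lin f + pos_part_lin (\<lambda>h. - f h)"
    by (rule pos_part_lin_add[OF f minus_f])
  moreover have "pos_part_lin (\<lambda>h. 0) = 0"
    using pos_part_lin_eq[of 0 "\<lambda>h. 0"] pos_part_zero nonneg_bdd_const[of 0] by simp
  ultimately have "pos_part_lin (\<lambda>h. - f h) = - pos_part_lin f" by simp
  moreover have "pos_part_lin (\<lambda>h. a * f h) = (- a) * pos_part_lin (\<lambda>h. - f h)"
    using pos_part_lin_nonneg_scale[OF minus_f, of "- a"] False by simp
  ultimately show ?thesis by simp
qed

lemma pos_part_lin_const: "pos_part_lin (\<lambda>h. c) = c * pos_part (\<lambda>x. 1)"
proof -
  have "0 \<le> c + \<bar>c\<bar>" by simp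
  then show ?thesis
    using pos_part_lin_eq[of "\<bar>c\<bar>" "\<lambda>h. c"] pos_part_const[of "c + \<bar>c\<bar>"]
      nonneg_bdd_const[of "c + \<bar>c\<bar>"]
    by (simp add: algebra_simps)
qed

lemma pos_part_lin_nonneg: "nonneg_bdd f \<Longrightarrow> 0 \<le> pos_part_lin f"
  using pos_part_lin_eq[of 0 f] pos_part_nonneg[of f] by simp

lemma pos_part_lin_translate:
  assumes f: "bdd_real_fun f" shows "pos_part_lin (\<lambda>h. f (g + h)) = pos_part_lin f"
proof -
  obtain c where c: "0 \<le> c" "nonneg_bdd (\<lambda>x. f x + c)" using nonneg_bdd_shift[OF f] by metis
  then show ?thesis
    using pos_part_lin_eq[OF c] pos_part_lin_eq[of c "\<lambda>h. f (g + h)"]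
      pos_part_translate[OF c(2), of g] nonneg_bdd_translate[OF c(2), of g]
    by simp
qed

lemma amenable: "amenable TYPE('g)"
  unfolding amenable_def
proof (rule exI[of _ "\<lambda>f. pos_part_lin f / pos_part (\<lambda>x. 1)"], intro conjI allI impI)
  have "0 < pos_part (\<lambda>x. 1)" using pos_part_one_ge_1 by simp
  then show "pos_part_lin (\<lambda>h. c) / pos_part (\<lambda>x. 1) = c" for c
    using pos_part_lin_const by simp
  show "pos_part_lin (\<lambda>h. f h + f' h) / pos_part (\<lambda>x. 1) =
      pos_part_lin f / pos_part (\<lambda>x. 1) + pos_part_lin f' / pos_part (\<lambda>x. 1)"
    if "bdd_real_fun f \<and> bdd_real_fun f'" for f f'
    using pos_part_lin_add that by (simp add: add_divide_distrib)
  show "pos_part_lin (\<lambda>h. a * f h) / pos_part (\<lambda>x. 1) = a * (pos_part_lin f / pos_part (\<lambda>x. 1))"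
    if "bdd_real_fun f" for a f
    using pos_part_lin_scale that by simp
  show "0 \<le> pos_part_lin f / pos_part (\<lambda>x. 1)" if "bdd_real_fun f \<and> (\<forall>h. 0 \<le> f h)" for f
    using pos_part_lin_nonneg pos_part_one_ge_1 that unfolding nonneg_bdd_def by simp
  show "pos_part_lin (\<lambda>h. f (- g + h)) / pos_part (\<lambda>x. 1) = pos_part_lin f / pos_part (\<lambda>x. 1)"
    if "bdd_real_fun f" for g f
    using pos_part_lin_translate that by simp
qed

end

section \<open>The evaluation cocycle\<close>

lemma invariant_functional_of_primitive:
  fixes \<phi> :: "('g::group_add \<Rightarrow> real) set \<Rightarrow> real"
  assumes \<phi>: "\<phi> \<in> mcarr (dual_module (osc_module :: ('g, ('g \<Rightarrow> real) set) nmod))"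
    and primitive: "\<And>f g. bdd_real_fun f \<Longrightarrow> f 0 = 0 \<Longrightarrow> f g = \<phi> {normalized_translate (- g) f} - \<phi> {f}"
  shows "invariant_functional (\<lambda>F. F 0 - \<phi> {\<lambda>x. F x - F 0})"
proof -
  let ?W = "osc_module :: ('g, ('g \<Rightarrow> real) set) nmod"
  have \<phi>_add: "\<forall>x\<in>mcarr ?W. \<forall>y\<in>mcarr ?W. \<phi> (madd ?W x y) = \<phi> x + \<phi> y"
    and \<phi>_scale: "\<forall>a. \<forall>x\<in>mcarr ?W. \<phi> (mscale ?W a x) = a * \<phi> x"
    and "\<exists>C. \<forall>x\<in>mcarr ?W. \<bar>\<phi> x\<bar> \<le> C * mnorm ?W x"
    using \<phi> by (auto simp: dual_module_def)
  then obtain C where C: "\<forall>x\<in>mcarr ?W. \<bar>\<phi> x\<bar> \<le> C * mnorm ?W x" by blast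
  define rep :: "('g \<Rightarrow> real) \<Rightarrow> 'g \<Rightarrow> real" where "rep F = (\<lambda>x. F x - F 0)" for F
  have rep: "bdd_real_fun (rep F)" "rep F 0 = 0" if "bdd_real_fun F" for F
    using bdd_real_fun_diff[OF that bdd_real_fun_const] unfolding rep_def by auto
  then have rep_in: "{rep F} \<in> mcarr ?W" if "bdd_real_fun F" for F
    using that by (auto simp: osc_module_simps)
  show ?thesis
    unfolding rep_def[symmetric]
  proof
    fix f f' :: "'g \<Rightarrow> real" assume f: "bdd_real_fun f" and f': "bdd_real_fun f'"
    have "{rep (\<lambda>h. f h + f' h)} = madd ?W {rep f} {rep f'}"
      by (simp add: osc_module_simps rep_def algebra_simps)
    then show "f 0 + f' 0 - \<phi> {rep (\<lambda>h. f h + f' h)} = f 0 - \<phi> {rep f} + (f' 0 - \<phi> {rep f'})"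
      using \<phi>_add rep_in[OF f] rep_in[OF f'] by simp
  next
    fix a and f :: "'g \<Rightarrow> real" assume f: "bdd_real_fun f"
    have "{rep (\<lambda>h. a * f h)} = mscale ?W a {rep f}"
      by (simp add: osc_module_simps rep_def algebra_simps)
    then show "a * f 0 - \<phi> {rep (\<lambda>h. a * f h)} = a * (f 0 - \<phi> {rep f})"
      using \<phi>_scale rep_in[OF f] by (simp add: algebra_simps)
  next
    have "{rep (\<lambda>h. 1)} = mscale ?W 0 {\<lambda>x. 0}" by (simp add: osc_module_simps rep_def)
    moreover have "{\<lambda>x::'g. 0::real} \<in> mcarr ?W" by (simp add: osc_module_simps bdd_real_fun_const)
    ultimately show "1 - \<phi> {rep (\<lambda>h. 1)} = 1" using \<phi>_scale by simp
  next
    fix g and F :: "'g \<Rightarrow> real" assume F: "bdd_real_fun F"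
    have "normalized_translate (- g) (rep F) = rep (\<lambda>x. F (g + x))" by (simp add: normalized_translate_def rep_def)
    with primitive[OF rep[OF F], of g] show "F (g + 0) - \<phi> {rep (\<lambda>x. F (g + x))} = F 0 - \<phi> {rep F}"
      by (simp add: rep_def)
  next
    show "\<exists>K. \<forall>F B. bdd_real_fun F \<longrightarrow> (\<forall>x. \<bar>F x\<bar> \<le> B) \<longrightarrow> \<bar>F 0 - \<phi> {rep F}\<bar> \<le> K * B"
    proof (intro exI[of _ "1 + 4 * \<bar>C\<bar>"] allI impI)
      fix F :: "'g \<Rightarrow> real" and B assume F: "bdd_real_fun F" and B: "\<forall>x. \<bar>F x\<bar> \<le> B"
      have "\<bar>rep F x\<bar> \<le> 2 * B" for x using B[rule_format, of x] B[rule_format, of 0] unfolding rep_def by linarith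
      then have osc: "osc (rep F) \<le> 4 * B" using osc_le_double_bound by fastforce
      have "\<bar>\<phi> {rep F}\<bar> \<le> C * osc (rep F)" using C[rule_format, OF rep_in[OF F]] by (simp only: osc_module_simps(6))
      also have "\<dots> \<le> \<bar>C\<bar> * osc (rep F)" using osc_nonneg[OF rep(1)[OF F]] by (simp add: mult_right_mono)
      also have "\<dots> \<le> \<bar>C\<bar> * (4 * B)" using osc by (simp add: mult_left_mono)
      finally show "\<bar>F 0 - \<phi> {rep F}\<bar> \<le> (1 + 4 * \<bar>C\<bar>) * B"
        using B[rule_format, of 0] by (simp add: algebra_simps)
    qed
  qed
qed

definition eval_functional :: "'g::group_add \<Rightarrow> ('g \<Rightarrow> real) set \<Rightarrow> real" where
  "eval_functional g A = (if A \<in> mcarr (osc_module :: ('g, ('g \<Rightarrow> real) set) nmod) then the_elem A g else 0)"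

lemma eval_functional_singleton:
  "bdd_real_fun f \<Longrightarrow> f 0 = 0 \<Longrightarrow> eval_functional g {f} = f g"
  by (auto simp: eval_functional_def osc_module_simps)

lemma scaled_eval_functional_in_dual:
  "(\<lambda>A. a * eval_functional g A) \<in> mcarr (dual_module (osc_module :: ('g::group_add, ('g \<Rightarrow> real) set) nmod))"
  unfolding dual_module_def
proof (simp, intro conjI ballI allI impI)
  show "\<exists>C. \<forall>A\<in>mcarr osc_module. \<bar>a * eval_functional g A\<bar> \<le> C * mnorm osc_module A"
  proof (rule exI[of _ "\<bar>a\<bar>"], intro ballI)
    fix A :: "('g \<Rightarrow> real) set" assume "A \<in> mcarr osc_module"
    then obtain f where f: "A = {f}" "bdd_real_fun f" "f 0 = 0" by (auto simp: mcarr_osc_module_iff)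
    show "\<bar>a * eval_functional g A\<bar> \<le> \<bar>a\<bar> * mnorm osc_module A"
      using osc_upper[OF f(2), of g 0] f
      by (simp add: eval_functional_singleton osc_module_simps abs_mult mult_left_mono)
  qed
qed (auto simp: eval_functional_def mcarr_osc_module_iff osc_module_simps
       bdd_real_fun_add bdd_real_fun_scale algebra_simps)

lemma dual_norm_scaled_eval_functional_le:
  "dual_norm (osc_module :: ('g::group_add, ('g \<Rightarrow> real) set) nmod) (\<lambda>A. a * eval_functional g A) \<le> \<bar>a\<bar>"
  unfolding dual_norm_def
proof (rule cSup_least)
  have "{\<lambda>x::'g. 0::real} \<in> mcarr osc_module" "mnorm osc_module {\<lambda>x::'g. 0::real} \<le> 1"
    using osc_eq_0_iff[of "\<lambda>x::'g. 0"] by (simp_all add: osc_module_simps bdd_real_fun_const)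
  then show "{\<bar>a * eval_functional g A\<bar> | A. A \<in> mcarr osc_module \<and> mnorm osc_module A \<le> 1} \<noteq> {}"
    by blast
next
  fix t assume "t \<in> {\<bar>a * eval_functional g A\<bar> | A. A \<in> mcarr osc_module \<and> mnorm osc_module A \<le> 1}"
  then obtain f where f: "bdd_real_fun f" "f 0 = 0" "osc f \<le> 1" "t = \<bar>a * eval_functional g {f}\<bar>"
    by (auto simp: mcarr_osc_module_iff osc_module_simps)
  moreover have "\<bar>f g\<bar> \<le> 1" using osc_upper[OF f(1), of g 0] f by simp
  ultimately show "t \<le> \<bar>a\<bar>" by (simp add: eval_functional_singleton abs_mult mult_left_le)
qed

lemma eval_functional_translate:
  assumes "bdd_real_fun f" "f 0 = 0"
  shows "eval_functional h (mact osc_module (- g) {f}) = f (g + h) - f g"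
proof -
  have "normalized_translate (- g) f 0 = 0" by (simp add: normalized_translate_def)
  then have "eval_functional h {normalized_translate (- g) f} = normalized_translate (- g) f h"
    by (rule eval_functional_singleton[OF bdd_real_fun_norm_translate[OF assms(1)]])
  moreover have "mact osc_module (- g) {f} = {normalized_translate (- g) f}" by (simp only: osc_module_simps)
  ultimately show ?thesis by (simp add: normalized_translate_def)
qed

lemma eval_cocycle:
  "cocycle (dual_module (osc_module :: ('g::group_add, ('g \<Rightarrow> real) set) nmod)) 1
     (\<lambda>xs. eval_functional (hd xs))"
  unfolding cocycle_def cochain_def
proof (intro conjI allI impI)
  fix xs :: "'g list"
  show "eval_functional (hd xs) \<in> mcarr (dual_module osc_module)"
    using scaled_eval_functional_in_dual[of 1 "hd xs"] by simp
next
  fix xs :: "'g list" assume "length xs = Suc 1"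
  then obtain g1 g2 where xs: "xs = [g1, g2]"
    by (metis One_nat_def Suc_length_conv length_0_conv)
  show "cobound (dual_module osc_module) 1 (\<lambda>xs. eval_functional (hd xs)) xs = mzero (dual_module osc_module)"
  proof
    fix A :: "('g \<Rightarrow> real) set"
    show "cobound (dual_module osc_module) 1 (\<lambda>xs. eval_functional (hd xs)) xs A = mzero (dual_module osc_module) A"
    proof (cases "A \<in> mcarr osc_module")
      case True
      then obtain f where f: "A = {f}" "bdd_real_fun f" "f 0 = 0" by (auto simp: mcarr_osc_module_iff)
      then show ?thesis using eval_functional_translate[OF f(2,3), of g2 g1] True
        by (simp add: xs cobound_def dual_module_def eval_functional_singleton)
    qed (simp add: xs cobound_def dual_module_def eval_functional_def)
  qed
qed

text \<open>In \<open>\<ell>\<^sup>\<infinity>(G, W')\<close> the evaluation cocycle has the primitive \<open>h \<mapsto> -eval\<^sub>h\<close>, which is bounded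
  because every \<open>eval\<^sub>h\<close> has norm at most \<open>1\<close> for the oscillation norm.\<close>

lemma eval_cocycle_linf_coboundary:
  "coboundary (linf_module (dual_module (osc_module :: ('g::group_add, ('g \<Rightarrow> real) set) nmod))
     (dual_norm osc_module)) 1 (\<lambda>xs h. eval_functional (hd xs))"
  unfolding coboundary_def
proof (simp, intro exI[of _ "\<lambda>xs h A. (-1) * eval_functional h A"] conjI allI impI)
  show "cochain (linf_module (dual_module (osc_module :: ('g, ('g \<Rightarrow> real) set) nmod)) (dual_norm osc_module)) 0
          (\<lambda>xs h A. (-1) * eval_functional h A)"
    unfolding cochain_def linf_module_def
    using scaled_eval_functional_in_dual[of "-1"] dual_norm_scaled_eval_functional_le[of "-1"] by auto
next
  fix xs :: "'g list" assume "length xs = Suc 0"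
  then obtain g where xs: "xs = [g]" by (metis Suc_length_conv length_0_conv)
  show "(\<lambda>h. eval_functional (hd xs)) =
    cobound (linf_module (dual_module osc_module) (dual_norm osc_module)) 0 (\<lambda>xs h A. (-1) * eval_functional h A) xs"
  proof (intro ext)
    fix h :: 'g and A :: "('g \<Rightarrow> real) set"
    show "eval_functional (hd xs) A =
      cobound (linf_module (dual_module osc_module) (dual_norm osc_module)) 0 (\<lambda>xs h A. (-1) * eval_functional h A) xs h A"
    proof (cases "A \<in> mcarr osc_module")
      case True
      then obtain f where f: "A = {f}" "bdd_real_fun f" "f 0 = 0" by (auto simp: mcarr_osc_module_iff)
      have "g + (- g + h) = h" by (simp add: add.assoc[symmetric])
      then show ?thesis using eval_functional_translate[OF f(2,3), of "- g + h" g] True f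
        by (simp add: xs cobound_def dual_module_def linf_module_def eval_functional_singleton)
    qed (simp add: xs cobound_def dual_module_def linf_module_def eval_functional_def)
  qed
qed

theorem amenable_if_comparison_injective_osc_module:
  assumes "comparison_injective (dual_module (osc_module :: ('g::group_add, ('g \<Rightarrow> real) set) nmod))
             (dual_norm osc_module) 1"
  shows "amenable (G :: 'g itself)"
proof -
  let ?W = "osc_module :: ('g, ('g \<Rightarrow> real) set) nmod"
  have "coboundary (dual_module ?W) 1 (\<lambda>xs. eval_functional (hd xs))"
    using assms eval_cocycle eval_cocycle_linf_coboundary unfolding comparison_injective_def by blast
  then obtain b where b: "cochain (dual_module ?W) 0 b"
    and b_primitive: "\<And>xs. length xs = Suc 0 \<Longrightarrow> eval_functional (hd xs) = cobound (dual_module ?W) 0 b xs"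
    by (auto simp: coboundary_def)
  have "b [] \<in> mcarr (dual_module ?W)" using b unfolding cochain_def by auto
  moreover have "f g = b [] {normalized_translate (- g) f} - b [] {f}" if "bdd_real_fun f" "f 0 = 0" for f g
  proof -
    have "{f} \<in> mcarr ?W" using that by (auto simp: osc_module_simps)
    then have "eval_functional g {f} = b [] (mact ?W (- g) {f}) - b [] {f}"
      using fun_cong[OF b_primitive[of "[g]"], of "{f}"] by (simp add: cobound_def dual_module_def)
    moreover have "mact ?W (- g) {f} = {normalized_translate (- g) f}" by (simp only: osc_module_simps)
    ultimately show ?thesis using eval_functional_singleton[OF that] by simp
  qed
  ultimately have "invariant_functional (\<lambda>F. F 0 - b [] {\<lambda>x. F x - F 0})"
    by (rule invariant_functional_of_primitive)
  then show ?thesis using invariant_functional.amenable unfolding amenable_def by blast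
qed

theorem comparison_injective_dual_if_amenable:
  fixes W :: "('g::group_add, 'w) nmod"
  assumes "amenable (G :: 'g itself)" and "normed_module W"
  shows "comparison_injective (dual_module W) (dual_norm W) k"
proof -
  obtain m :: "('g \<Rightarrow> real) \<Rightarrow> real" where "invariant_mean m"
    using assms(1) amenable_iff_invariant_mean by blast
  then show ?thesis using invariant_mean.comparison_injective_dual assms(2) by blast
qed

theorem mainTheorem1:
  fixes G :: "'g::group_add itself"
  shows "(amenable G \<longrightarrow>
            (\<forall>W :: ('g, 'w) nmod. normed_module W \<longrightarrow>
               (\<forall>k. comparison_injective (dual_module W) (dual_norm W) k))) \<and>
         (amenable G \<longleftrightarrow>
            (\<forall>W :: ('g, ('g \<Rightarrow> real) set) nmod. normed_module W \<longrightarrow>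
               comparison_injective (dual_module W) (dual_norm W) 1)) \<and>
         (amenable G \<longleftrightarrow>
            (\<forall>W :: ('g, ('g \<Rightarrow> real) set) nmod. normed_module W \<longrightarrow>
               (\<forall>k. comparison_injective (dual_module W) (dual_norm W) k)))"
proof -
  have "comparison_injective (dual_module W) (dual_norm W) k"
    if "amenable G" "normed_module W" for W :: "('g, 'w) nmod" and k
    using comparison_injective_dual_if_amenable that .
  moreover have "comparison_injective (dual_module W) (dual_norm W) k"
    if "amenable G" "normed_module W" for W :: "('g, ('g \<Rightarrow> real) set) nmod" and k
    using comparison_injective_dual_if_amenable that .
  moreover have "amenable G"
    if "\<forall>W :: ('g, ('g \<Rightarrow> real) set) nmod. normed_module W \<longrightarrow>
          comparison_injective (dual_module W) (dual_norm W) 1"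
    using amenable_if_comparison_injective_osc_module normed_module_osc_module that by blast
  ultimately show ?thesis by blast
qed

end
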